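(* Let $A$ be a finite alphabet and let $f : A^* \to \mathbb{N}$ be a polyblind function. Then $f$ is $k$-repetitive for every integer $k \ge 1$.
   Context: A bimachine is a tuple $(A, M, \mu, \lambda)$ where $A$ is a finite alphabet, $M$ a finite monoid, $\mu : A^* \to M$ a monoid morphism and $\lambda : M \times A \times M \to \mathbb{N}$; it computes $f(w) = \sum_{i=1}^{|w|} \lambda(\mu(w[1{:}i-1]), w[i], \mu(w[i+1{:}|w|]))$. A function $A^* \to \mathbb{N}$ is regular if it is computed by a bimachine. The polyblind functions are the smallest class of functions $A^* \to \mathbb{N}$ containing the regular functions and closed under sum $f+g$ and Hadamard (pointwise) product $(f \cdot g)(w) = f(w) g(w)$. For $k \ge 1$, a function $f : A^* \to \mathbb{N}$ is $k$-repetitive if there exists an integer $\omega_0 \ge 1$ such that for all words $\alpha, \beta, \alpha_0, u_1, \alpha_1, \dots, u_k, \alpha_k \in A^*$ and every positive multiple $\omega$ of $\omega_0$, setting $W(Z_1,\dots,Z_k) = \alpha_0 \prod_{i=1}^k u_i^{\omega Z_i} \alpha_i$ and $w = W(1,\dots,1)$, there exists a function $F : \mathbb{N}^k \to \mathbb{N}$ such that for all integers $X_1,\dots,X_k,Y_1,\dots,Y_k \ge 3$, $f(\alpha\, w^{2\omega-1} W(X_1,\dots,X_k)\, w^{\omega-1}\, W(Y_1,\dots,Y_k)\, w^{\omega}\, \beta) = F(X_1+Y_1, \dots, X_k+Y_k)$. *)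

theory Defs
  imports "HOL-Algebra.Group"
begin

text \<open>Words over the finite alphabet 'a are lists. A finite monoid is represented
  (up to isomorphism) by a HOL-Algebra monoid whose carrier is a finite set of naturals.\<close>

definition bimachine_fun ::
  "(nat, 'b) monoid_scheme \<Rightarrow> ('a list \<Rightarrow> nat) \<Rightarrow> (nat \<Rightarrow> 'a \<Rightarrow> nat \<Rightarrow> nat) \<Rightarrow> 'a list \<Rightarrow> nat" where
  "bimachine_fun M \<mu> lam w = (\<Sum>i<length w. lam (\<mu> (take i w)) (w ! i) (\<mu> (drop (Suc i) w)))"

definition is_bimachine ::
  "(nat, 'b) monoid_scheme \<Rightarrow> ('a list \<Rightarrow> nat) \<Rightarrow> bool" where
  "is_bimachine M \<mu> \<longleftrightarrow> monoid M \<and> finite (carrier M) \<and>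
     (\<forall>w. \<mu> w \<in> carrier M) \<and> \<mu> [] = \<one>\<^bsub>M\<^esub> \<and>
     (\<forall>u v. \<mu> (u @ v) = \<mu> u \<otimes>\<^bsub>M\<^esub> \<mu> v)"

definition regular_fun :: "('a::finite list \<Rightarrow> nat) \<Rightarrow> bool" where
  "regular_fun f \<longleftrightarrow> (\<exists>(M :: nat monoid) \<mu> lam. is_bimachine M \<mu> \<and> f = bimachine_fun M \<mu> lam)"

inductive polyblind :: "('a::finite list \<Rightarrow> nat) \<Rightarrow> bool" where
  reg: "regular_fun f \<Longrightarrow> polyblind f"
| sum: "polyblind f \<Longrightarrow> polyblind g \<Longrightarrow> polyblind (\<lambda>w. f w + g w)"
| prod: "polyblind f \<Longrightarrow> polyblind g \<Longrightarrow> polyblind (\<lambda>w. f w * g w)"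

definition wpow :: "'a list \<Rightarrow> nat \<Rightarrow> 'a list" where
  "wpow u n = concat (replicate n u)"

text \<open>W(Z_1..Z_k) = alpha_0 prod_{i=1}^k u_i^{omega Z_i} alpha_i, with 0-based lists:
  as = [alpha_0..alpha_k], us = [u_1..u_k], Z = [Z_1..Z_k].\<close>
definition Wword :: "nat \<Rightarrow> 'a list list \<Rightarrow> 'a list list \<Rightarrow> nat \<Rightarrow> nat list \<Rightarrow> 'a list" where
  "Wword k as us \<omega> Z = as ! 0 @ concat (map (\<lambda>i. wpow (us ! i) (\<omega> * Z ! i) @ as ! Suc i) [0..<k])"

definition k_repetitive :: "nat \<Rightarrow> ('a list \<Rightarrow> nat) \<Rightarrow> bool" where
  "k_repetitive k f \<longleftrightarrow> (\<exists>\<omega>0::nat. \<omega>0 \<ge> 1 \<and>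
     (\<forall>\<alpha> \<beta> (as :: 'a list list) (us :: 'a list list) (\<omega>::nat).
        length as = k + 1 \<longrightarrow> length us = k \<longrightarrow> \<omega>0 dvd \<omega> \<longrightarrow> \<omega> > 0 \<longrightarrow>
        (let w = Wword k as us \<omega> (replicate k 1) in
         \<exists>F :: nat list \<Rightarrow> nat. \<forall>X Y :: nat list.
           length X = k \<longrightarrow> length Y = k \<longrightarrow> (\<forall>i<k. X ! i \<ge> 3 \<and> Y ! i \<ge> 3) \<longrightarrow>
           f (\<alpha> @ wpow w (2 * \<omega> - 1) @ Wword k as us \<omega> X @ wpow w (\<omega> - 1) @
              Wword k as us \<omega> Y @ wpow w \<omega> @ \<beta>) = F (map2 (+) X Y))))"

end

theory Submission
  imports Defs
begin

(* Pick \<omega> such that \<mu>(u^\<omega>) is idempotent for every word u (possible since the monoid is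
   finite). Then \<mu>(W(Z)) is the same for all Z with positive entries, and in
   \<alpha> w^(2\<omega>-1) W(X) w^(\<omega>-1) W(Y) w^\<omega> \<beta> idempotence absorbs the extra copy of w, so the
   bimachine reads the blocks W(X) and W(Y) in the same left and right contexts.
   In a fixed context an idempotent power v^n contributes affinely in n, so each block
   contributes a + \<Sigma> b_i (Z_i - 2) and the whole word evaluates to C + g(X) + g(Y) with
   g affine, a function of X + Y. Such functions are closed under pointwise sums and
   products once \<omega> is a multiple of both exponents. *)

definition idempotent_exponent :: "('a, 'b) monoid_scheme \<Rightarrow> nat \<Rightarrow> bool" where
  "idempotent_exponent G \<omega> \<longleftrightarrow>
     0 < \<omega> \<and> (\<forall>x\<in>carrier G. x [^]\<^bsub>G\<^esub> \<omega> \<otimes>\<^bsub>G\<^esub> x [^]\<^bsub>G\<^esub> \<omega> = x [^]\<^bsub>G\<^esub> \<omega>)"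

lemma (in monoid) idempotent_nat_pow:
  assumes "e \<in> carrier G" "e \<otimes> e = e" "0 < n"
  shows "e [^] (n :: nat) = e"
  using assms(3)
proof (induction n)
  case (Suc n)
  then show ?case
    using assms(1,2) by (cases n) auto
qed simp

lemma (in monoid) idempotent_pow_absorb:
  assumes "x \<in> carrier G" "x [^] \<omega> \<otimes> x [^] \<omega> = x [^] \<omega>" "0 < (\<omega> :: nat)"
  shows "x [^] (\<omega> - 1) \<otimes> x \<otimes> x [^] \<omega> = x [^] \<omega>"
    and "x [^] (2 * \<omega> - 1) \<otimes> x \<otimes> x [^] (\<omega> - 1) = x [^] (2 * \<omega> - 1)"
proof -
  have pred: "x [^] (n - 1) \<otimes> x = x [^] n" if "0 < n" for n :: nat
    using that by (metis Suc_diff_1 nat_pow_Suc)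
  show "x [^] (\<omega> - 1) \<otimes> x \<otimes> x [^] \<omega> = x [^] \<omega>"
    unfolding pred[OF assms(3)] by (rule assms(2))
  have double: "x [^] (2 * \<omega> - 1) \<otimes> x = x [^] (2 * \<omega>)"
    by (rule pred) (use assms(3) in simp)
  have exp_eq: "\<omega> + (\<omega> - 1) = 2 * \<omega> - 1"
    using assms(3) by simp
  have "x [^] (2 * \<omega> - 1) \<otimes> x \<otimes> x [^] (\<omega> - 1) = x [^] \<omega> \<otimes> x [^] \<omega> \<otimes> x [^] (\<omega> - 1)"
    unfolding double using assms(1) by (simp add: mult_2 nat_pow_mult)
  also have "\<dots> = x [^] (2 * \<omega> - 1)"
    using assms(1,2) by (metis nat_pow_closed nat_pow_mult exp_eq)
  finally show "x [^] (2 * \<omega> - 1) \<otimes> x \<otimes> x [^] (\<omega> - 1) = x [^] (2 * \<omega> - 1)" .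
qed

lemma (in monoid) eventually_periodic_pow:
  assumes "finite (carrier G)" "x \<in> carrier G"
  obtains i p :: nat where "0 < p" "\<And>n t. i \<le> n \<Longrightarrow> x [^] (n + t * p) = x [^] n"
proof -
  have "\<not> inj_on (\<lambda>n. x [^] n) {..card (carrier G)}"
  proof
    assume "inj_on (\<lambda>n. x [^] n) {..card (carrier G)}"
    then have "card {..card (carrier G)} \<le> card (carrier G)"
      using assms by (intro card_inj_on_le) auto
    then show False
      by simp
  qed
  then obtain i j :: nat where "i < j" and ij: "x [^] i = x [^] j"
    unfolding inj_on_def by (metis linorder_neqE_nat)
  define p where "p = j - i"
  have base: "x [^] (i + t * p) = x [^] i" for t
  proof (induction t)
    case (Suc t)
    have exp_eq: "i + Suc t * p = j + t * p"
      using \<open>i < j\<close> by (simp add: p_def)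
    have "x [^] (i + Suc t * p) = x [^] j \<otimes> x [^] (t * p)"
      unfolding exp_eq using assms(2) by (simp add: nat_pow_mult)
    also have "\<dots> = x [^] (i + t * p)"
      using assms(2) by (simp add: ij [symmetric] nat_pow_mult)
    finally show ?case
      using Suc by simp
  qed simp
  show thesis
  proof (rule that)
    show "0 < p"
      using \<open>i < j\<close> by (simp add: p_def)
    fix n t :: nat
    assume "i \<le> n"
    then have exp_eq: "n + t * p = (i + t * p) + (n - i)"
      by simp
    have "x [^] (n + t * p) = x [^] (i + t * p) \<otimes> x [^] (n - i)"
      unfolding exp_eq using assms(2) by (simp add: nat_pow_mult)
    also have "\<dots> = x [^] n"
      using \<open>i \<le> n\<close> assms(2) by (simp add: base nat_pow_mult)
    finally show "x [^] (n + t * p) = x [^] n" .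
  qed
qed

lemma (in monoid) finite_pow_idempotent:
  assumes "finite (carrier G)" "x \<in> carrier G"
  shows "\<exists>e > 0. \<forall>\<omega> :: nat. e dvd \<omega> \<longrightarrow> 0 < \<omega> \<longrightarrow> x [^] \<omega> \<otimes> x [^] \<omega> = x [^] \<omega>"
proof -
  obtain i p :: nat where "0 < p" and periodic: "\<And>n t. i \<le> n \<Longrightarrow> x [^] (n + t * p) = x [^] n"
    using eventually_periodic_pow[OF assms] by metis
  have "x [^] \<omega> \<otimes> x [^] \<omega> = x [^] \<omega>" if "Suc i * p dvd \<omega>" "0 < \<omega>" for \<omega> :: nat
  proof -
    from \<open>Suc i * p dvd \<omega>\<close> obtain c where "\<omega> = Suc i * p * c"
      by (rule dvdE)
    then have c: "\<omega> = Suc i * c * p"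
      by (simp add: algebra_simps)
    have "0 < c"
      using \<open>0 < \<omega>\<close> c by (cases c) auto
    have "Suc i * 1 * 1 \<le> Suc i * c * p"
      using \<open>0 < c\<close> \<open>0 < p\<close> by (intro mult_le_mono) auto
    then have "i \<le> \<omega>"
      using c by simp
    have "x [^] \<omega> \<otimes> x [^] \<omega> = x [^] (\<omega> + Suc i * c * p)"
      using assms(2) c by (simp add: nat_pow_mult)
    also have "\<dots> = x [^] \<omega>"
      using periodic[OF \<open>i \<le> \<omega>\<close>] by simp
    finally show ?thesis .
  qed
  moreover have "0 < Suc i * p"
    using \<open>0 < p\<close> by simp
  ultimately show ?thesis
    by blast
qed

lemma (in monoid) finite_idempotent_exponent:
  assumes "finite (carrier G)"
  obtains \<omega>0 :: nat where "0 < \<omega>0" "\<And>\<omega>. \<omega>0 dvd \<omega> \<Longrightarrow> 0 < \<omega> \<Longrightarrow> idempotent_exponent G \<omega>"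
proof -
  obtain E :: "'a \<Rightarrow> nat" where E: "\<And>x. x \<in> carrier G \<Longrightarrow> 0 < E x"
    and E_idem: "\<And>x \<omega>. x \<in> carrier G \<Longrightarrow> E x dvd \<omega> \<Longrightarrow> 0 < \<omega> \<Longrightarrow> x [^] \<omega> \<otimes> x [^] \<omega> = x [^] \<omega>"
    using finite_pow_idempotent[OF assms] by metis
  show thesis
  proof (rule that)
    show "0 < prod E (carrier G)"
      using E by (simp add: prod_pos)
    fix \<omega> :: nat
    assume "prod E (carrier G) dvd \<omega>" "0 < \<omega>"
    then have "E x dvd \<omega>" if "x \<in> carrier G" for x
      using dvd_trans[OF dvd_prodI[OF assms that]] by blast
    then show "idempotent_exponent G \<omega>"
      using E_idem \<open>0 < \<omega>\<close> by (simp add: idempotent_exponent_def)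
  qed
qed

lemma wpow_0 [simp]: "wpow u 0 = []"
  by (simp add: wpow_def)

lemma wpow_Suc: "wpow u (Suc n) = u @ wpow u n"
  by (simp add: wpow_def)

lemma wpow_add: "wpow u (m + n) = wpow u m @ wpow u n"
  by (simp add: wpow_def replicate_add)

lemma wpow_Suc_right: "wpow u (Suc n) = wpow u n @ u"
  using wpow_add[of u n 1] by (simp add: wpow_def)

lemma wpow_mult: "wpow u (m * n) = wpow (wpow u m) n"
  by (induction n) (simp_all add: wpow_add wpow_Suc)

lemma Wword_0: "Wword 0 as us \<omega> Z = as ! 0"
  by (simp add: Wword_def)

lemma Wword_Suc:
  "Wword (Suc k) as us \<omega> Z = Wword k as us \<omega> Z @ wpow (us ! k) (\<omega> * Z ! k) @ as ! Suc k"
  by (simp add: Wword_def)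

definition repetition_word ::
  "nat \<Rightarrow> nat \<Rightarrow> 'a list list \<Rightarrow> 'a list list \<Rightarrow> 'a list \<Rightarrow> 'a list \<Rightarrow> nat list \<Rightarrow> nat list \<Rightarrow> 'a list" where
  "repetition_word k \<omega> as us \<alpha> \<beta> X Y =
     (let w = Wword k as us \<omega> (replicate k 1)
      in \<alpha> @ wpow w (2 * \<omega> - 1) @ Wword k as us \<omega> X @ wpow w (\<omega> - 1) @
         Wword k as us \<omega> Y @ wpow w \<omega> @ \<beta>)"

definition k_repetitive_at :: "nat \<Rightarrow> nat \<Rightarrow> ('a list \<Rightarrow> nat) \<Rightarrow> bool" where
  "k_repetitive_at k \<omega> f \<longleftrightarrow>
     (\<forall>\<alpha> \<beta> as us. length as = k + 1 \<longrightarrow> length us = k \<longrightarrow>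
        (\<exists>F :: nat list \<Rightarrow> nat. \<forall>X Y.
           length X = k \<longrightarrow> length Y = k \<longrightarrow> (\<forall>i<k. 3 \<le> X ! i \<and> 3 \<le> Y ! i) \<longrightarrow>
           f (repetition_word k \<omega> as us \<alpha> \<beta> X Y) = F (map2 (+) X Y)))"

lemma k_repetitive_iff:
  "k_repetitive k f \<longleftrightarrow> (\<exists>\<omega>0 \<ge> 1. \<forall>\<omega>. \<omega>0 dvd \<omega> \<longrightarrow> 0 < \<omega> \<longrightarrow> k_repetitive_at k \<omega> f)"
  unfolding k_repetitive_def k_repetitive_at_def repetition_word_def Let_def
  by (intro ex_cong1 conj_cong refl) auto

lemma k_repetitive_at_combine:
  assumes f: "k_repetitive_at k \<omega> f" and g: "k_repetitive_at k \<omega> g"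
  shows "k_repetitive_at k \<omega> (\<lambda>w. h (f w) (g w))"
  unfolding k_repetitive_at_def
proof (intro allI impI)
  fix \<alpha> \<beta> :: "'a list" and as us :: "'a list list"
  assume len: "length as = k + 1" "length us = k"
  obtain F where F: "\<And>X Y. length X = k \<Longrightarrow> length Y = k \<Longrightarrow> \<forall>i<k. 3 \<le> X ! i \<and> 3 \<le> Y ! i \<Longrightarrow>
      f (repetition_word k \<omega> as us \<alpha> \<beta> X Y) = F (map2 (+) X Y)"
    using f len unfolding k_repetitive_at_def by blast
  obtain G where G: "\<And>X Y. length X = k \<Longrightarrow> length Y = k \<Longrightarrow> \<forall>i<k. 3 \<le> X ! i \<and> 3 \<le> Y ! i \<Longrightarrow>
      g (repetition_word k \<omega> as us \<alpha> \<beta> X Y) = G (map2 (+) X Y)"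
    using g len unfolding k_repetitive_at_def by blast
  show "\<exists>H. \<forall>X Y. length X = k \<longrightarrow> length Y = k \<longrightarrow> (\<forall>i<k. 3 \<le> X ! i \<and> 3 \<le> Y ! i) \<longrightarrow>
      h (f (repetition_word k \<omega> as us \<alpha> \<beta> X Y)) (g (repetition_word k \<omega> as us \<alpha> \<beta> X Y))
        = H (map2 (+) X Y)"
    by (intro exI[of _ "\<lambda>T. h (F T) (G T)"]) (simp add: F G)
qed

lemma k_repetitive_combine:
  assumes "k_repetitive k f" "k_repetitive k g"
  shows "k_repetitive k (\<lambda>w. h (f w) (g w))"
proof -
  obtain \<omega>f \<omega>g :: nat where "1 \<le> \<omega>f" "1 \<le> \<omega>g"
    and "\<And>\<omega>. \<omega>f dvd \<omega> \<Longrightarrow> 0 < \<omega> \<Longrightarrow> k_repetitive_at k \<omega> f"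
    and "\<And>\<omega>. \<omega>g dvd \<omega> \<Longrightarrow> 0 < \<omega> \<Longrightarrow> k_repetitive_at k \<omega> g"
    using assms unfolding k_repetitive_iff by metis
  then show ?thesis
    unfolding k_repetitive_iff
    by (intro exI[of _ "\<omega>f * \<omega>g"]) (auto intro: k_repetitive_at_combine dvd_mult_left dvd_mult_right)
qed

locale bimachine =
  fixes M :: "(nat, 'b) monoid_scheme" (structure)
    and \<mu> :: "'a list \<Rightarrow> nat"
    and lam :: "nat \<Rightarrow> 'a \<Rightarrow> nat \<Rightarrow> nat"
  assumes is_bimachine: "is_bimachine M \<mu>"
begin

sublocale monoid M
  using is_bimachine by (simp add: is_bimachine_def)

lemma finite_carrier: "finite (carrier M)"
  using is_bimachine by (simp add: is_bimachine_def)

lemma mu_closed [simp]: "\<mu> w \<in> carrier M"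
  using is_bimachine by (simp add: is_bimachine_def)

lemma mu_Nil [simp]: "\<mu> [] = \<one>"
  using is_bimachine by (simp add: is_bimachine_def)

lemma mu_append: "\<mu> (u @ v) = \<mu> u \<otimes> \<mu> v"
  using is_bimachine by (simp add: is_bimachine_def)

lemma mu_wpow: "\<mu> (wpow u n) = \<mu> u [^] n"
  by (induction n) (simp_all add: wpow_Suc_right mu_append)

lemma mu_wpow_idempotent_exponent:
  assumes "idempotent_exponent M \<omega>" "0 < n"
  shows "\<mu> (wpow u (\<omega> * n)) = \<mu> (wpow u \<omega>)"
  using assms idempotent_nat_pow[of "\<mu> u [^] \<omega>" n]
  by (simp add: idempotent_exponent_def mu_wpow nat_pow_pow)

lemma mu_Wword:
  assumes "idempotent_exponent M \<omega>" "\<forall>i<k. 0 < Z ! i" "\<forall>i<k. 0 < Z' ! i"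
  shows "\<mu> (Wword k as us \<omega> Z) = \<mu> (Wword k as us \<omega> Z')"
  using assms(2,3)
proof (induction k)
  case (Suc k)
  then show ?case
    using mu_wpow_idempotent_exponent[OF assms(1)] by (simp add: Wword_Suc mu_append)
qed (simp add: Wword_0)

definition ctx_weight :: "nat \<Rightarrow> 'a list \<Rightarrow> nat \<Rightarrow> nat" where
  "ctx_weight L w R = (\<Sum>i<length w. lam (L \<otimes> \<mu> (take i w)) (w ! i) (\<mu> (drop (Suc i) w) \<otimes> R))"

lemma bimachine_fun_eq_ctx_weight: "bimachine_fun M \<mu> lam w = ctx_weight \<one> w \<one>"
  by (simp add: bimachine_fun_def ctx_weight_def)

lemma ctx_weight_Nil [simp]: "ctx_weight L [] R = 0"
  by (simp add: ctx_weight_def)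

lemma ctx_weight_Cons:
  assumes "L \<in> carrier M"
  shows "ctx_weight L (a # w) R = lam L a (\<mu> w \<otimes> R) + ctx_weight (L \<otimes> \<mu> [a]) w R"
proof -
  have "L \<otimes> \<mu> (a # take i w) = L \<otimes> \<mu> [a] \<otimes> \<mu> (take i w)" for i
    using mu_append[of "[a]" "take i w"] assms by (simp add: m_assoc)
  then show ?thesis
    using assms unfolding ctx_weight_def length_Cons sum.lessThan_Suc_shift by simp
qed

lemma ctx_weight_append:
  assumes "L \<in> carrier M" "R \<in> carrier M"
  shows "ctx_weight L (u @ v) R = ctx_weight L u (\<mu> v \<otimes> R) + ctx_weight (L \<otimes> \<mu> u) v R"
  using assms(1)
proof (induction u arbitrary: L)
  case (Cons a u)
  have "\<mu> (a # u) = \<mu> [a] \<otimes> \<mu> u"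
    using mu_append[of "[a]" u] by simp
  then have L_a_u: "L \<otimes> \<mu> [a] \<otimes> \<mu> u = L \<otimes> \<mu> (a # u)"
    using Cons.prems by (simp add: m_assoc)
  have "ctx_weight L ((a # u) @ v) R
      = lam L a (\<mu> u \<otimes> (\<mu> v \<otimes> R)) + ctx_weight (L \<otimes> \<mu> [a]) (u @ v) R"
    using Cons.prems assms(2) by (simp add: ctx_weight_Cons mu_append m_assoc)
  also have "\<dots> = ctx_weight L (a # u) (\<mu> v \<otimes> R) + ctx_weight (L \<otimes> \<mu> (a # u)) v R"
    using Cons.prems by (simp add: Cons.IH ctx_weight_Cons L_a_u)
  finally show ?case .
qed simp

lemma ctx_weight_wpow_idempotent:
  assumes idem: "\<mu> v \<otimes> \<mu> v = \<mu> v" and "L \<in> carrier M" "R \<in> carrier M"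
  shows "ctx_weight (L \<otimes> \<mu> v) (wpow v n) (\<mu> v \<otimes> R) = n * ctx_weight (L \<otimes> \<mu> v) v (\<mu> v \<otimes> R)"
proof (induction n)
  case (Suc n)
  have "\<mu> (wpow v n) \<otimes> \<mu> v = \<mu> v"
    using idempotent_nat_pow[OF mu_closed idem, of "Suc n"] by (simp add: mu_wpow)
  then have right: "\<mu> (wpow v n) \<otimes> (\<mu> v \<otimes> R) = \<mu> v \<otimes> R"
    using assms(3) by (simp flip: m_assoc)
  have left: "L \<otimes> \<mu> v \<otimes> \<mu> v = L \<otimes> \<mu> v"
    using idem assms(2) by (simp add: m_assoc)
  show ?case
    using Suc assms(2,3) by (simp add: wpow_Suc ctx_weight_append right left)
qed simp

lemma ctx_weight_wpow_affine:
  assumes idem: "\<mu> v \<otimes> \<mu> v = \<mu> v" and "L \<in> carrier M" "R \<in> carrier M"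
  shows "\<exists>a b. \<forall>n\<ge>2. ctx_weight L (wpow v n) R = a + b * (n - 2)"
proof (intro exI allI impI)
  fix n :: nat
  assume "2 \<le> n"
  then obtain m where n: "n = Suc (Suc m)"
    using add_2_eq_Suc le_Suc_ex by blast
  have mu_v_pow: "\<mu> (wpow v (Suc m)) = \<mu> v"
    using idempotent_nat_pow[OF mu_closed idem, of "Suc m"] by (simp add: mu_wpow)
  have right: "\<mu> (wpow v m @ v) = \<mu> v"
    using mu_v_pow by (simp add: wpow_Suc_right)
  have "\<mu> v \<otimes> \<mu> (wpow v m) = \<mu> v"
    using mu_v_pow by (simp add: wpow_Suc mu_append)
  then have left: "L \<otimes> \<mu> v \<otimes> \<mu> (wpow v m) = L \<otimes> \<mu> v"
    using assms(2) by (simp add: m_assoc)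
  have "ctx_weight L (wpow v n) R = ctx_weight L (v @ wpow v m @ v) R"
    by (simp add: n wpow_Suc flip: wpow_Suc_right)
  also have "\<dots> = ctx_weight L v (\<mu> (wpow v m @ v) \<otimes> R)
      + ctx_weight (L \<otimes> \<mu> v) (wpow v m) (\<mu> v \<otimes> R) + ctx_weight (L \<otimes> \<mu> v \<otimes> \<mu> (wpow v m)) v R"
    using assms(2,3) by (simp add: ctx_weight_append)
  also have "\<dots> = ctx_weight L v (\<mu> v \<otimes> R) + ctx_weight (L \<otimes> \<mu> v) (wpow v m) (\<mu> v \<otimes> R)
      + ctx_weight (L \<otimes> \<mu> v) v R"
    by (simp only: right left)
  also have "\<dots> = (ctx_weight L v (\<mu> v \<otimes> R) + ctx_weight (L \<otimes> \<mu> v) v R)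
      + ctx_weight (L \<otimes> \<mu> v) v (\<mu> v \<otimes> R) * (n - 2)"
    using ctx_weight_wpow_idempotent[OF assms, of m] by (simp add: n)
  finally show "ctx_weight L (wpow v n) R = (ctx_weight L v (\<mu> v \<otimes> R) + ctx_weight (L \<otimes> \<mu> v) v R)
      + ctx_weight (L \<otimes> \<mu> v) v (\<mu> v \<otimes> R) * (n - 2)" .
qed

lemma ctx_weight_Wword_affine:
  assumes idem: "idempotent_exponent M \<omega>"
  shows "L \<in> carrier M \<Longrightarrow> R \<in> carrier M \<Longrightarrow> \<exists>a b. \<forall>Z. (\<forall>i<k. 2 \<le> Z ! i) \<longrightarrow>
           ctx_weight L (Wword k as us \<omega> Z) R = a + (\<Sum>i<k. b i * (Z ! i - 2))"
proof (induction k arbitrary: L R)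
  case (Suc k)
  define v where "v = wpow (us ! k) \<omega>"
  define a\<^sub>k where "a\<^sub>k = as ! Suc k"
  define L' where "L' = L \<otimes> \<mu> (Wword k as us \<omega> (replicate k 1))"
  have v_idem: "\<mu> v \<otimes> \<mu> v = \<mu> v"
    using idem by (simp add: idempotent_exponent_def v_def mu_wpow)
  obtain a b where ab: "\<And>Z. \<forall>i<k. 2 \<le> Z ! i \<Longrightarrow>
      ctx_weight L (Wword k as us \<omega> Z) (\<mu> v \<otimes> \<mu> a\<^sub>k \<otimes> R) = a + (\<Sum>i<k. b i * (Z ! i - 2))"
    using Suc by force
  obtain c d where cd: "\<And>n. 2 \<le> n \<Longrightarrow> ctx_weight L' (wpow v n) (\<mu> a\<^sub>k \<otimes> R) = c + d * (n - 2)"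
    using ctx_weight_wpow_affine[OF v_idem, of L' "\<mu> a\<^sub>k \<otimes> R"] Suc.prems by (auto simp: L'_def)
  show ?case
  proof (intro exI allI impI)
    fix Z :: "nat list"
    assume Z: "\<forall>i<Suc k. 2 \<le> Z ! i"
    then have Z_pos: "0 < Z ! i" if "i < Suc k" for i
      using that by (metis gr0I not_numeral_le_zero)
    have block: "wpow (us ! k) (\<omega> * Z ! k) = wpow v (Z ! k)"
      by (simp add: v_def wpow_mult)
    have mu_block: "\<mu> (wpow v (Z ! k)) = \<mu> v"
      using mu_wpow_idempotent_exponent[OF idem, of "Z ! k"] Z_pos[of k]
      by (simp add: v_def wpow_mult)
    have mu_prefix: "\<mu> (Wword k as us \<omega> Z) = \<mu> (Wword k as us \<omega> (replicate k 1))"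
      by (intro mu_Wword[OF idem]) (simp_all add: Z_pos)
    have "ctx_weight L (Wword (Suc k) as us \<omega> Z) R
        = ctx_weight L (Wword k as us \<omega> Z) (\<mu> v \<otimes> \<mu> a\<^sub>k \<otimes> R)
          + ctx_weight L' (wpow v (Z ! k)) (\<mu> a\<^sub>k \<otimes> R) + ctx_weight (L' \<otimes> \<mu> v) a\<^sub>k R"
      using Suc.prems
      by (simp add: Wword_Suc block ctx_weight_append mu_append mu_block mu_prefix L'_def a\<^sub>k_def m_assoc)
    also have "\<dots> = (a + c + ctx_weight (L' \<otimes> \<mu> v) a\<^sub>k R) + (\<Sum>i<Suc k. (b(k := d)) i * (Z ! i - 2))"
      using ab cd Z by simp
    finally show "ctx_weight L (Wword (Suc k) as us \<omega> Z) R
        = (a + c + ctx_weight (L' \<otimes> \<mu> v) a\<^sub>k R) + (\<Sum>i<Suc k. (b(k := d)) i * (Z ! i - 2))" .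
  qed
qed (simp add: Wword_0)

lemma bimachine_fun_two_blocks:
  obtains C where "\<And>y\<^sub>1 y\<^sub>2. \<mu> y\<^sub>1 = m\<^sub>1 \<Longrightarrow> \<mu> y\<^sub>2 = m\<^sub>2 \<Longrightarrow>
    bimachine_fun M \<mu> lam (x\<^sub>1 @ y\<^sub>1 @ x\<^sub>2 @ y\<^sub>2 @ x\<^sub>3)
      = C + ctx_weight (\<mu> x\<^sub>1) y\<^sub>1 (\<mu> x\<^sub>2 \<otimes> m\<^sub>2 \<otimes> \<mu> x\<^sub>3) + ctx_weight (\<mu> x\<^sub>1 \<otimes> m\<^sub>1 \<otimes> \<mu> x\<^sub>2) y\<^sub>2 (\<mu> x\<^sub>3)"
proof (rule that)
  fix y\<^sub>1 y\<^sub>2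
  assume "\<mu> y\<^sub>1 = m\<^sub>1" "\<mu> y\<^sub>2 = m\<^sub>2"
  then have "m\<^sub>1 = \<mu> y\<^sub>1" "m\<^sub>2 = \<mu> y\<^sub>2"
    by simp_all
  then show "bimachine_fun M \<mu> lam (x\<^sub>1 @ y\<^sub>1 @ x\<^sub>2 @ y\<^sub>2 @ x\<^sub>3)
      = (ctx_weight \<one> x\<^sub>1 (m\<^sub>1 \<otimes> \<mu> x\<^sub>2 \<otimes> m\<^sub>2 \<otimes> \<mu> x\<^sub>3) + ctx_weight (\<mu> x\<^sub>1 \<otimes> m\<^sub>1) x\<^sub>2 (m\<^sub>2 \<otimes> \<mu> x\<^sub>3)
         + ctx_weight (\<mu> x\<^sub>1 \<otimes> m\<^sub>1 \<otimes> \<mu> x\<^sub>2 \<otimes> m\<^sub>2) x\<^sub>3 \<one>)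
        + ctx_weight (\<mu> x\<^sub>1) y\<^sub>1 (\<mu> x\<^sub>2 \<otimes> m\<^sub>2 \<otimes> \<mu> x\<^sub>3) + ctx_weight (\<mu> x\<^sub>1 \<otimes> m\<^sub>1 \<otimes> \<mu> x\<^sub>2) y\<^sub>2 (\<mu> x\<^sub>3)"
    by (simp add: bimachine_fun_eq_ctx_weight ctx_weight_append mu_append m_assoc)
qed

lemma mu_repetition_contexts:
  assumes idem: "idempotent_exponent M \<omega>"
  shows "\<mu> (wpow w (\<omega> - 1)) \<otimes> \<mu> w \<otimes> \<mu> (wpow w \<omega> @ \<beta>) = \<mu> (wpow w \<omega> @ \<beta>)"
    and "\<mu> (\<alpha> @ wpow w (2 * \<omega> - 1)) \<otimes> \<mu> w \<otimes> \<mu> (wpow w (\<omega> - 1)) = \<mu> (\<alpha> @ wpow w (2 * \<omega> - 1))"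
proof -
  have "0 < \<omega>" "\<mu> w [^] \<omega> \<otimes> \<mu> w [^] \<omega> = \<mu> w [^] \<omega>"
    using idem by (simp_all add: idempotent_exponent_def)
  note absorb = idempotent_pow_absorb[OF mu_closed this(2,1)]
  have "\<mu> (wpow w (\<omega> - 1)) \<otimes> \<mu> w \<otimes> \<mu> (wpow w \<omega> @ \<beta>)
      = \<mu> w [^] (\<omega> - 1) \<otimes> \<mu> w \<otimes> \<mu> w [^] \<omega> \<otimes> \<mu> \<beta>"
    by (simp add: mu_append mu_wpow m_assoc)
  then show "\<mu> (wpow w (\<omega> - 1)) \<otimes> \<mu> w \<otimes> \<mu> (wpow w \<omega> @ \<beta>) = \<mu> (wpow w \<omega> @ \<beta>)"
    unfolding absorb(1) by (simp add: mu_append mu_wpow)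
  have "\<mu> (\<alpha> @ wpow w (2 * \<omega> - 1)) \<otimes> \<mu> w \<otimes> \<mu> (wpow w (\<omega> - 1))
      = \<mu> \<alpha> \<otimes> (\<mu> w [^] (2 * \<omega> - 1) \<otimes> \<mu> w \<otimes> \<mu> w [^] (\<omega> - 1))"
    by (simp add: mu_append mu_wpow m_assoc)
  then show "\<mu> (\<alpha> @ wpow w (2 * \<omega> - 1)) \<otimes> \<mu> w \<otimes> \<mu> (wpow w (\<omega> - 1)) = \<mu> (\<alpha> @ wpow w (2 * \<omega> - 1))"
    unfolding absorb(2) by (simp add: mu_append mu_wpow)
qed

lemma bimachine_fun_repetition_word:
  assumes idem: "idempotent_exponent M \<omega>"
  obtains P S C where "P \<in> carrier M" "S \<in> carrier M"
    "\<And>X Y. \<forall>i<k. 0 < X ! i \<Longrightarrow> \<forall>i<k. 0 < Y ! i \<Longrightarrow>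
       bimachine_fun M \<mu> lam (repetition_word k \<omega> as us \<alpha> \<beta> X Y)
         = C + ctx_weight P (Wword k as us \<omega> X) S + ctx_weight P (Wword k as us \<omega> Y) S"
proof -
  define w where "w = Wword k as us \<omega> (replicate k 1)"
  define A\<^sub>1 where "A\<^sub>1 = wpow w (2 * \<omega> - 1)"
  define A\<^sub>2 where "A\<^sub>2 = wpow w (\<omega> - 1)"
  define A\<^sub>3 where "A\<^sub>3 = wpow w \<omega>"
  note right_ctx = mu_repetition_contexts(1)[OF idem, of w \<beta>, folded A\<^sub>2_def A\<^sub>3_def]
  note left_ctx = mu_repetition_contexts(2)[OF idem, of \<alpha> w, folded A\<^sub>1_def A\<^sub>2_def]
  obtain C where "\<And>y\<^sub>1 y\<^sub>2. \<mu> y\<^sub>1 = \<mu> w \<Longrightarrow> \<mu> y\<^sub>2 = \<mu> w \<Longrightarrow>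
      bimachine_fun M \<mu> lam ((\<alpha> @ A\<^sub>1) @ y\<^sub>1 @ A\<^sub>2 @ y\<^sub>2 @ (A\<^sub>3 @ \<beta>))
        = C + ctx_weight (\<mu> (\<alpha> @ A\<^sub>1)) y\<^sub>1 (\<mu> A\<^sub>2 \<otimes> \<mu> w \<otimes> \<mu> (A\<^sub>3 @ \<beta>))
          + ctx_weight (\<mu> (\<alpha> @ A\<^sub>1) \<otimes> \<mu> w \<otimes> \<mu> A\<^sub>2) y\<^sub>2 (\<mu> (A\<^sub>3 @ \<beta>))"
    using bimachine_fun_two_blocks[of "\<mu> w" "\<mu> w" "\<alpha> @ A\<^sub>1" A\<^sub>2 "A\<^sub>3 @ \<beta>"] by blast
  then have C: "\<And>y\<^sub>1 y\<^sub>2. \<mu> y\<^sub>1 = \<mu> w \<Longrightarrow> \<mu> y\<^sub>2 = \<mu> w \<Longrightarrow>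
      bimachine_fun M \<mu> lam ((\<alpha> @ A\<^sub>1) @ y\<^sub>1 @ A\<^sub>2 @ y\<^sub>2 @ (A\<^sub>3 @ \<beta>))
        = C + ctx_weight (\<mu> (\<alpha> @ A\<^sub>1)) y\<^sub>1 (\<mu> (A\<^sub>3 @ \<beta>)) + ctx_weight (\<mu> (\<alpha> @ A\<^sub>1)) y\<^sub>2 (\<mu> (A\<^sub>3 @ \<beta>))"
    unfolding right_ctx left_ctx .
  show thesis
  proof (rule that[of "\<mu> (\<alpha> @ A\<^sub>1)" "\<mu> (A\<^sub>3 @ \<beta>)" C])
    fix X Y :: "nat list"
    assume "\<forall>i<k. 0 < X ! i" "\<forall>i<k. 0 < Y ! i"
    then have "\<mu> (Wword k as us \<omega> X) = \<mu> w" "\<mu> (Wword k as us \<omega> Y) = \<mu> w"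
      unfolding w_def by (auto intro: mu_Wword[OF idem])
    moreover have "repetition_word k \<omega> as us \<alpha> \<beta> X Y
        = (\<alpha> @ A\<^sub>1) @ Wword k as us \<omega> X @ A\<^sub>2 @ Wword k as us \<omega> Y @ (A\<^sub>3 @ \<beta>)"
      by (simp add: repetition_word_def Let_def w_def A\<^sub>1_def A\<^sub>2_def A\<^sub>3_def)
    ultimately show "bimachine_fun M \<mu> lam (repetition_word k \<omega> as us \<alpha> \<beta> X Y)
        = C + ctx_weight (\<mu> (\<alpha> @ A\<^sub>1)) (Wword k as us \<omega> X) (\<mu> (A\<^sub>3 @ \<beta>))
          + ctx_weight (\<mu> (\<alpha> @ A\<^sub>1)) (Wword k as us \<omega> Y) (\<mu> (A\<^sub>3 @ \<beta>))"
      by (simp only: C)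
  qed simp_all
qed

lemma k_repetitive_at_bimachine_fun:
  assumes idem: "idempotent_exponent M \<omega>"
  shows "k_repetitive_at k \<omega> (bimachine_fun M \<mu> lam)"
  unfolding k_repetitive_at_def
proof (intro allI impI)
  fix \<alpha> \<beta> :: "'a list" and as us :: "'a list list"
  obtain P S C where "P \<in> carrier M" "S \<in> carrier M" and C:
    "\<And>X Y. \<forall>i<k. 0 < X ! i \<Longrightarrow> \<forall>i<k. 0 < Y ! i \<Longrightarrow>
       bimachine_fun M \<mu> lam (repetition_word k \<omega> as us \<alpha> \<beta> X Y)
         = C + ctx_weight P (Wword k as us \<omega> X) S + ctx_weight P (Wword k as us \<omega> Y) S"
    using bimachine_fun_repetition_word[OF idem] by metis
  then obtain a b where ab: "\<And>Z. \<forall>i<k. 2 \<le> Z ! i \<Longrightarrow>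
      ctx_weight P (Wword k as us \<omega> Z) S = a + (\<Sum>i<k. b i * (Z ! i - 2))"
    using ctx_weight_Wword_affine[OF idem] by blast
  show "\<exists>F. \<forall>X Y. length X = k \<longrightarrow> length Y = k \<longrightarrow> (\<forall>i<k. 3 \<le> X ! i \<and> 3 \<le> Y ! i) \<longrightarrow>
      bimachine_fun M \<mu> lam (repetition_word k \<omega> as us \<alpha> \<beta> X Y) = F (map2 (+) X Y)"
  proof (intro exI[of _ "\<lambda>T. C + 2 * a + (\<Sum>i<k. b i * (T ! i - 4))"] allI impI)
    fix X Y :: "nat list"
    assume "length X = k" "length Y = k" and XY: "\<forall>i<k. 3 \<le> X ! i \<and> 3 \<le> Y ! i"
    then have "\<forall>i<k. 0 < X ! i" "\<forall>i<k. 0 < Y ! i" "\<forall>i<k. 2 \<le> X ! i" "\<forall>i<k. 2 \<le> Y ! i"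
      by auto
    then have "bimachine_fun M \<mu> lam (repetition_word k \<omega> as us \<alpha> \<beta> X Y)
        = C + 2 * a + (\<Sum>i<k. b i * (X ! i - 2) + b i * (Y ! i - 2))"
      by (simp add: C ab sum.distrib)
    also have "(\<Sum>i<k. b i * (X ! i - 2) + b i * (Y ! i - 2)) = (\<Sum>i<k. b i * (map2 (+) X Y ! i - 4))"
      using XY \<open>length X = k\<close> \<open>length Y = k\<close> by (intro sum.cong) (auto simp flip: add_mult_distrib2)
    finally show "bimachine_fun M \<mu> lam (repetition_word k \<omega> as us \<alpha> \<beta> X Y)
        = C + 2 * a + (\<Sum>i<k. b i * (map2 (+) X Y ! i - 4))" .
  qed
qed

lemma k_repetitive_bimachine_fun: "k_repetitive k (bimachine_fun M \<mu> lam)"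
proof -
  obtain \<omega>0 :: nat where "0 < \<omega>0" "\<And>\<omega>. \<omega>0 dvd \<omega> \<Longrightarrow> 0 < \<omega> \<Longrightarrow> idempotent_exponent M \<omega>"
    using finite_idempotent_exponent[OF finite_carrier] by blast
  then show ?thesis
    unfolding k_repetitive_iff by (intro exI[of _ \<omega>0]) (auto intro: k_repetitive_at_bimachine_fun)
qed

end

lemma regular_fun_k_repetitive: "regular_fun f \<Longrightarrow> k_repetitive k f"
  unfolding regular_fun_def using bimachine.k_repetitive_bimachine_fun bimachine.intro by blast

lemma polyblind_k_repetitive: "polyblind f \<Longrightarrow> k_repetitive k f"
  by (induction rule: polyblind.induct) (auto intro: regular_fun_k_repetitive k_repetitive_combine)

theorem mainTheorem1:
  fixes f :: "'a::finite list \<Rightarrow> nat"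
  assumes "polyblind f"
  shows "\<forall>k::nat. k \<ge> 1 \<longrightarrow> k_repetitive k f"
  using polyblind_k_repetitive[OF assms] by blast

end
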